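(* Let $\Omega\in\mathscr A$ be a $1$-admissible set with $\mathscr C_1(\Omega)\neq\emptyset$. If (P.4), (P.5) and (P.6) hold, then there exist $1$-Cheeger sets of $\Omega$ of minimal $\mathfrak m$-measure among all $1$-Cheeger sets of $\Omega$.
   Context: $(X,\mathscr A,\mathfrak m)$ is a non-negative $\sigma$-finite measure space; for $A,B\in\mathscr A$, "$A\subset B$" means $\mathfrak m(A\setminus B)=0$. $P\colon\mathscr A\to[0,+\infty]$ is a proper functional. (P.4): if $\chi_{E_k}\to\chi_E$ in $L^1(X,\mathfrak m)$ then $P(E)\le\liminf_k P(E_k)$. (P.5): for every $c\ge0$, $\{\chi_E:E\in\mathscr A,\ P(E)\le c\}$ is compact in $L^1(X,\mathfrak m)$. (P.6): there is $f\colon(0,+\infty)\to(0,+\infty)$ with $\lim_{\varepsilon\to0^+}f(\varepsilon)=+\infty$ such that $\mathfrak m(E)\le\varepsilon$ implies $P(E)\ge f(\varepsilon)\mathfrak m(E)$. $\Omega$ is $1$-admissible if it contains some $E$ with $0<\mathfrak m(E)<+\infty$, $P(E)<+\infty$; $h_1(\Omega)=\inf\{P(E)/\mathfrak m(E): E\subset\Omega,\ 0<\mathfrak m(E)<+\infty,\ P(E)<+\infty\}$; minimizers are $1$-Cheeger sets, forming $\mathscr C_1(\Omega)$. *)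

theory Defs
  imports "HOL-Analysis.Analysis"
begin

definition ae_subset :: "'a measure \<Rightarrow> 'a set \<Rightarrow> 'a set \<Rightarrow> bool" where
  "ae_subset M A B \<longleftrightarrow> emeasure M (A - B) = 0"

definition chi_L1_conv :: "'a measure \<Rightarrow> (nat \<Rightarrow> 'a set) \<Rightarrow> 'a set \<Rightarrow> bool" where
  "chi_L1_conv M Es E \<longleftrightarrow>
     (\<forall>k. integrable M (\<lambda>x. indicator (Es k) x :: real)) \<and>
     integrable M (\<lambda>x. indicator E x :: real) \<and>
     ((\<lambda>k. \<integral>x. \<bar>indicator (Es k) x - indicator E x\<bar> \<partial>M) \<longlonglongrightarrow> (0::real))"

definition cheeger_competitors :: "'a measure \<Rightarrow> ('a set \<Rightarrow> ennreal) \<Rightarrow> 'a set \<Rightarrow> 'a set set" where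
  "cheeger_competitors M P \<Omega> =
     {E \<in> sets M. ae_subset M E \<Omega> \<and> 0 < emeasure M E \<and> emeasure M E < \<infinity> \<and> P E < \<infinity>}"

definition one_admissible :: "'a measure \<Rightarrow> ('a set \<Rightarrow> ennreal) \<Rightarrow> 'a set \<Rightarrow> bool" where
  "one_admissible M P \<Omega> \<longleftrightarrow> cheeger_competitors M P \<Omega> \<noteq> {}"

definition h1 :: "'a measure \<Rightarrow> ('a set \<Rightarrow> ennreal) \<Rightarrow> 'a set \<Rightarrow> ennreal" where
  "h1 M P \<Omega> = (INF E \<in> cheeger_competitors M P \<Omega>. P E / emeasure M E)"

definition cheeger1_sets :: "'a measure \<Rightarrow> ('a set \<Rightarrow> ennreal) \<Rightarrow> 'a set \<Rightarrow> 'a set set" where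
  "cheeger1_sets M P \<Omega> = {E \<in> cheeger_competitors M P \<Omega>. P E / emeasure M E = h1 M P \<Omega>}"

end

theory Submission
  imports Defs
begin

text \<open>
  Take 1-Cheeger sets whose measures decrease to the infimum \<open>\<mu>\<close> of the measures of all
  1-Cheeger sets. On 1-Cheeger sets \<open>P = h\<^sub>1 m\<close>, so their perimeters are bounded and (P.5) gives
  an \<open>L\<^sup>1\<close>-limit \<open>E\<close> of a subsequence, with \<open>m(E) = \<mu>\<close>. By (P.6) a set with \<open>P \<le> h\<^sub>1 m\<close>
  cannot have small positive measure, so \<open>\<mu> > 0\<close>; then lower semicontinuity (P.4) gives
  \<open>P(E) \<le> h\<^sub>1 m(E)\<close>, i.e. \<open>E\<close> is a 1-Cheeger set, and it has the least measure.
\<close>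

lemma measure_diff_le_L1_indicator:
  assumes "A \<in> sets M" "B \<in> sets M" "emeasure M A < \<infinity>" "emeasure M B < \<infinity>"
  shows "\<bar>measure M A - measure M B\<bar> \<le> (LINT x|M. \<bar>indicat_real A x - indicat_real B x\<bar>)"
proof -
  have "measure M A - measure M B = (\<integral>x. indicator A x - indicator B x \<partial>M :: real)"
    using assms by (simp add: integral_diff integrable_indicator_iff sets.Int_space_eq2)
  also have "\<bar>\<dots>\<bar> \<le> (LINT x|M. \<bar>indicat_real A x - indicat_real B x\<bar>)"
    using integral_norm_bound[of M "\<lambda>x. indicator A x - indicator B x :: real"] by simp
  finally show ?thesis .
qed

lemma measure_Diff_le_L1_indicator:
  assumes "A \<in> sets M" "B \<in> sets M" "C \<in> sets M" "emeasure M A < \<infinity>" "emeasure M B < \<infinity>"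
  shows "measure M (B - C) \<le> (LINT x|M. \<bar>indicat_real A x - indicat_real B x\<bar>) + measure M (A - C)"
proof -
  have fin: "emeasure M (A - C) < \<infinity>" "emeasure M (B - C) < \<infinity>"
    using assms by (meson Diff_subset emeasure_mono le_less_trans sets.Diff)+
  have "measure M (B - C) = (\<integral>x. indicator (B - C) x \<partial>M :: real)"
    using assms by simp
  also have "\<dots> \<le> (\<integral>x. \<bar>indicator A x - indicator B x\<bar> + indicator (A - C) x \<partial>M :: real)"
  proof (rule integral_mono)
    have "integrable M (indicat_real S)" if "S \<in> sets M" "emeasure M S < \<infinity>" for S
      using that by (simp add: integrable_indicator_iff sets.Int_space_eq2)
    then show "integrable M (indicat_real (B - C))"
      and "integrable M (\<lambda>x. \<bar>indicat_real A x - indicat_real B x\<bar> + indicat_real (A - C) x)"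
      using assms fin by auto
  qed (auto simp: indicator_def)
  also have "\<dots> = (LINT x|M. \<bar>indicat_real A x - indicat_real B x\<bar>) + measure M (A - C)"
    using assms fin by (simp add: integral_add integrable_indicator_iff sets.Int_space_eq2)
  finally show ?thesis .
qed

lemma chi_L1_conv_finite_emeasure:
  assumes "\<And>k. Es k \<in> sets M" "E \<in> sets M" "chi_L1_conv M Es E"
  shows "emeasure M (Es k) < \<infinity>" "emeasure M E < \<infinity>"
  using assms by (simp_all add: chi_L1_conv_def integrable_indicator_iff sets.Int_space_eq2)

lemma chi_L1_conv_emeasure:
  assumes Es: "\<And>k. Es k \<in> sets M" and E: "E \<in> sets M" and conv: "chi_L1_conv M Es E"
  shows "(\<lambda>k. emeasure M (Es k)) \<longlonglongrightarrow> emeasure M E"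
proof -
  note finite = chi_L1_conv_finite_emeasure[OF Es E conv]
  have "(\<lambda>k. measure M (Es k) - measure M E) \<longlonglongrightarrow> 0"
  proof (rule Lim_null_comparison)
    show "(\<lambda>k. LINT x|M. \<bar>indicat_real (Es k) x - indicat_real E x\<bar>) \<longlonglongrightarrow> 0"
      using conv unfolding chi_L1_conv_def by simp
    show "\<forall>\<^sub>F k in sequentially.
        norm (measure M (Es k) - measure M E) \<le> (LINT x|M. \<bar>indicat_real (Es k) x - indicat_real E x\<bar>)"
      using measure_diff_le_L1_indicator[OF Es E finite] by simp
  qed
  then have "(\<lambda>k. ennreal (measure M (Es k))) \<longlonglongrightarrow> ennreal (measure M E)"
    by (simp add: LIM_zero_iff)
  then show ?thesis
    using finite by (simp add: emeasure_eq_ennreal_measure less_top)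
qed

lemma chi_L1_conv_ae_subset:
  assumes Es: "\<And>k. Es k \<in> sets M" and E: "E \<in> sets M" and \<Omega>: "\<Omega> \<in> sets M"
    and conv: "chi_L1_conv M Es E" and Es_subset: "\<And>k. ae_subset M (Es k) \<Omega>"
  shows "ae_subset M E \<Omega>"
proof -
  note finite = chi_L1_conv_finite_emeasure[OF Es E conv]
  have "measure M (E - \<Omega>) \<le> (LINT x|M. \<bar>indicat_real (Es k) x - indicat_real E x\<bar>)" for k
    using measure_Diff_le_L1_indicator[OF Es E \<Omega> finite(1)[of k] finite(2)] Es_subset[of k]
    by (simp add: ae_subset_def measure_def)
  then have "measure M (E - \<Omega>) \<le> 0"
    using conv unfolding chi_L1_conv_def
    by (intro tendsto_le[OF trivial_limit_sequentially _ tendsto_const]) auto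
  then have "measure M (E - \<Omega>) = 0"
    by (simp add: antisym)
  moreover have "emeasure M (E - \<Omega>) < \<infinity>"
    using finite(2) by (meson Diff_subset E \<Omega> emeasure_mono le_less_trans sets.Diff)
  ultimately show ?thesis
    by (simp add: ae_subset_def emeasure_eq_ennreal_measure less_top)
qed

lemma cheeger1_sets_perimeter_eq:
  assumes "F \<in> cheeger1_sets M P \<Omega>"
  shows "P F = h1 M P \<Omega> * emeasure M F"
proof -
  have "emeasure M F \<noteq> 0" "emeasure M F \<noteq> \<infinity>" "P F / emeasure M F = h1 M P \<Omega>"
    using assms by (auto simp: cheeger1_sets_def cheeger_competitors_def)
  then have "P F = P F * (emeasure M F / emeasure M F)"
    by (simp add: less_top)
  also have "\<dots> = P F / emeasure M F * emeasure M F"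
    by (simp add: ennreal_divide_times)
  finally show ?thesis
    using \<open>P F / emeasure M F = h1 M P \<Omega>\<close> by simp
qed

lemma h1_finite_if_cheeger1_sets:
  assumes "F \<in> cheeger1_sets M P \<Omega>"
  shows "h1 M P \<Omega> < \<infinity>"
proof -
  have "P F < \<infinity>" "emeasure M F \<noteq> 0" and h: "h1 M P \<Omega> = P F / emeasure M F"
    using assms by (auto simp: cheeger1_sets_def cheeger_competitors_def)
  then show ?thesis
    unfolding h by (simp add: ennreal_divide_eq_top_iff flip: less_top)
qed

lemma emeasure_lower_bound_if_perimeter_le:
  fixes f :: "real \<Rightarrow> real" and P :: "'a set \<Rightarrow> ennreal"
  assumes f_lim: "filterlim f at_top (at_right 0)"
    and f_bound: "\<forall>\<epsilon>>0. \<forall>E \<in> sets M. emeasure M E \<le> ennreal \<epsilon> \<longrightarrow> ennreal (f \<epsilon>) * emeasure M E \<le> P E"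
  obtains \<delta> where "\<delta> > 0"
    "\<And>E. E \<in> sets M \<Longrightarrow> 0 < emeasure M E \<Longrightarrow> P E \<le> ennreal c * emeasure M E \<Longrightarrow> ennreal \<delta> < emeasure M E"
proof -
  have "\<forall>\<^sub>F \<epsilon> in at_right 0. max 0 c < f \<epsilon>"
    using f_lim filterlim_at_top_dense by blast
  then obtain b :: real where "b > 0" "\<And>\<epsilon>. 0 < \<epsilon> \<Longrightarrow> \<epsilon> < b \<Longrightarrow> max 0 c < f \<epsilon>"
    unfolding eventually_at_right_field by auto
  then obtain \<delta> where \<delta>: "\<delta> > 0" "max 0 c < f \<delta>"
    by (meson field_lbound_gt_zero)
  have "ennreal \<delta> < emeasure M E"
    if E: "E \<in> sets M" "0 < emeasure M E" "P E \<le> ennreal c * emeasure M E" for E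
  proof (rule ccontr)
    assume "\<not> ennreal \<delta> < emeasure M E"
    then have small: "emeasure M E \<le> ennreal \<delta>" by simp
    then have "emeasure M E * ennreal (f \<delta>) \<le> emeasure M E * ennreal c"
      using f_bound \<delta>(1) E by (metis mult.commute order.trans)
    moreover have "emeasure M E \<noteq> \<infinity>"
      using le_less_trans[OF small ennreal_less_top] by simp
    ultimately have "ennreal (f \<delta>) \<le> ennreal c"
      using E(2) by (simp add: ennreal_mult_le_mult_iff)
    then show False
      using \<delta>(2) by (simp add: ennreal_le_iff2)
  qed
  then show ?thesis
    using \<delta>(1) that by blast
qed

lemma INF_emeasure_cheeger1_sets_pos:
  fixes f :: "real \<Rightarrow> real" and P :: "'a set \<Rightarrow> ennreal"
  assumes "filterlim f at_top (at_right 0)"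
    and "\<forall>\<epsilon>>0. \<forall>E \<in> sets M. emeasure M E \<le> ennreal \<epsilon> \<longrightarrow> ennreal (f \<epsilon>) * emeasure M E \<le> P E"
  shows "0 < (INF F \<in> cheeger1_sets M P \<Omega>. emeasure M F)"
proof (cases "cheeger1_sets M P \<Omega> = {}")
  case False
  then obtain F\<^sub>0 where F\<^sub>0: "F\<^sub>0 \<in> cheeger1_sets M P \<Omega>"
    by blast
  have h: "ennreal (enn2real (h1 M P \<Omega>)) = h1 M P \<Omega>"
    using h1_finite_if_cheeger1_sets[OF F\<^sub>0] by simp
  obtain \<delta> where "\<delta> > 0" and \<delta>: "\<And>E. E \<in> sets M \<Longrightarrow> 0 < emeasure M E \<Longrightarrow>
      P E \<le> ennreal (enn2real (h1 M P \<Omega>)) * emeasure M E \<Longrightarrow> ennreal \<delta> < emeasure M E"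
    using emeasure_lower_bound_if_perimeter_le[OF assms] by blast
  have "ennreal \<delta> \<le> emeasure M F" if F: "F \<in> cheeger1_sets M P \<Omega>" for F
    using F \<delta>[of F] cheeger1_sets_perimeter_eq[OF F] h
    by (simp add: cheeger1_sets_def cheeger_competitors_def)
  then have "ennreal \<delta> \<le> (INF F \<in> cheeger1_sets M P \<Omega>. emeasure M F)"
    by (rule INF_greatest)
  then show ?thesis
    by (meson \<open>0 < \<delta>\<close> ennreal_less_zero_iff order.strict_trans2)
qed simp

lemma minimizing_sequence_below:
  fixes g :: "'b \<Rightarrow> 'c::{linorder_topology, first_countable_topology, complete_linorder}"
  assumes "x\<^sub>0 \<in> C"
  obtains u where "\<And>n. u n \<in> C" "\<And>n. g (u n) \<le> g x\<^sub>0" "(\<lambda>n. g (u n)) \<longlonglongrightarrow> (INF x\<in>C. g x)"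
proof -
  have "g ` C \<noteq> {}"
    using assms by blast
  then obtain v where v: "\<forall>n. v n \<in> g ` C" "v \<longlonglongrightarrow> (INF x\<in>C. g x)"
    by (metis Inf_as_limit)
  then have "\<forall>n. \<exists>x\<in>C. v n = g x"
    by (simp add: image_iff)
  then obtain w where w: "\<And>n. w n \<in> C" "\<And>n. g (w n) = v n"
    by metis
  define u where "u n = (if g (w n) \<le> g x\<^sub>0 then w n else x\<^sub>0)" for n
  have "(\<lambda>n. min (v n) (g x\<^sub>0)) \<longlonglongrightarrow> min (INF x\<in>C. g x) (g x\<^sub>0)"
    using v(2) by (intro tendsto_min tendsto_const)
  moreover have "min (INF x\<in>C. g x) (g x\<^sub>0) = (INF x\<in>C. g x)"
    using assms by (simp add: INF_lower min_absorb1)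
  moreover have "g (u n) = min (v n) (g x\<^sub>0)" for n
    by (simp add: u_def w min_def)
  ultimately show ?thesis
    using that[of u] assms w(1) by (simp add: u_def)
qed

lemma cheeger1_sets_L1_convergent_subseq:
  fixes Fs :: "nat \<Rightarrow> 'a set"
  assumes P5_compact: "\<And>c (Es :: nat \<Rightarrow> 'a set). (\<forall>k. Es k \<in> sets M \<and> P (Es k) \<le> ennreal c) \<Longrightarrow>
               \<exists>r E. strict_mono r \<and> E \<in> sets M \<and> P E \<le> ennreal c \<and> chi_L1_conv M (Es \<circ> r) E"
    and Fs: "\<And>k. Fs k \<in> cheeger1_sets M P \<Omega>"
    and bounded: "\<And>k. emeasure M (Fs k) \<le> K" "K < \<infinity>"
  obtains r E where "strict_mono r" "E \<in> sets M" "chi_L1_conv M (Fs \<circ> r) E"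
proof -
  let ?h = "h1 M P \<Omega>"
  have h_finite: "?h < \<infinity>"
    by (rule h1_finite_if_cheeger1_sets[OF Fs])
  have Fs_sets: "Fs k \<in> sets M" for k
    using Fs by (simp add: cheeger1_sets_def cheeger_competitors_def)
  have P_bounded: "P (Fs k) \<le> ennreal (enn2real ?h * enn2real K)" for k
  proof -
    have "P (Fs k) = ?h * emeasure M (Fs k)"
      by (rule cheeger1_sets_perimeter_eq[OF Fs])
    also have "\<dots> \<le> ?h * K"
      by (rule mult_left_mono[OF bounded(1)]) simp
    also have "\<dots> = ennreal (enn2real ?h * enn2real K)"
      using h_finite bounded(2) by (simp add: ennreal_mult)
    finally show ?thesis .
  qed
  have "\<exists>r E. strict_mono r \<and> E \<in> sets M \<and> P E \<le> ennreal (enn2real ?h * enn2real K)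
      \<and> chi_L1_conv M (Fs \<circ> r) E"
    by (rule P5_compact) (simp add: Fs_sets P_bounded)
  then show ?thesis
    using that by blast
qed

lemma cheeger1_sets_closed_under_L1_limits:
  assumes P4: "\<And>Es E. (\<forall>k. Es k \<in> sets M) \<Longrightarrow> E \<in> sets M \<Longrightarrow> chi_L1_conv M Es E \<Longrightarrow>
               P E \<le> liminf (\<lambda>k. P (Es k))"
    and "\<Omega> \<in> sets M" and Fs: "\<And>k. Fs k \<in> cheeger1_sets M P \<Omega>"
    and E: "E \<in> sets M" "chi_L1_conv M Fs E" "0 < emeasure M E"
  shows "E \<in> cheeger1_sets M P \<Omega>"
proof -
  let ?h = "h1 M P \<Omega>"
  have Fs_sets: "Fs k \<in> sets M" "ae_subset M (Fs k) \<Omega>" for k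
    using Fs[of k] by (simp_all add: cheeger1_sets_def cheeger_competitors_def)
  have h_finite: "?h < top"
    using h1_finite_if_cheeger1_sets[OF Fs] by simp
  have E_finite: "emeasure M E < \<infinity>"
    by (rule chi_L1_conv_finite_emeasure(2)[OF Fs_sets(1) E(1,2)])
  have "(\<lambda>k. ?h * emeasure M (Fs k)) \<longlonglongrightarrow> ?h * emeasure M E"
    using ennreal_tendsto_cmult[OF h_finite chi_L1_conv_emeasure[OF Fs_sets(1) E(1,2)]] .
  then have "(\<lambda>k. P (Fs k)) \<longlonglongrightarrow> ?h * emeasure M E"
    by (simp add: cheeger1_sets_perimeter_eq[OF Fs])
  then have P_E: "P E \<le> ?h * emeasure M E"
    using P4[of Fs E] Fs_sets E by (simp add: lim_imp_Liminf)
  have "E \<in> cheeger_competitors M P \<Omega>"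
    using E E_finite P_E h_finite chi_L1_conv_ae_subset[OF Fs_sets(1) E(1) \<open>\<Omega> \<in> sets M\<close> E(2) Fs_sets(2)]
    by (auto simp: cheeger_competitors_def ennreal_mult_less_top intro: le_less_trans)
  moreover have "P E / emeasure M E \<le> ?h"
    using P_E E(3) by (simp add: divide_le_posI_ennreal mult.commute)
  moreover have "?h \<le> P E / emeasure M E"
    using calculation(1) unfolding h1_def by (rule INF_lower)
  ultimately show ?thesis
    by (simp add: cheeger1_sets_def antisym)
qed

theorem proposition3p15:
  fixes M :: "'a measure" and P :: "'a set \<Rightarrow> ennreal" and \<Omega> :: "'a set"
  assumes sigma_finite: "sigma_finite_measure M"
    and proper: "\<exists>E \<in> sets M. P E \<noteq> \<infinity>"
    and P4: "\<And>Es E. (\<forall>k. Es k \<in> sets M) \<Longrightarrow> E \<in> sets M \<Longrightarrow> chi_L1_conv M Es E \<Longrightarrow>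
               P E \<le> liminf (\<lambda>k. P (Es k))"
    and P5_L1: "\<And>c E. E \<in> sets M \<Longrightarrow> P E \<le> ennreal c \<Longrightarrow> integrable M (\<lambda>x. indicator E x :: real)"
    and P5_compact: "\<And>c (Es :: nat \<Rightarrow> 'a set). (\<forall>k. Es k \<in> sets M \<and> P (Es k) \<le> ennreal c) \<Longrightarrow>
               \<exists>r E. strict_mono r \<and> E \<in> sets M \<and> P E \<le> ennreal c \<and> chi_L1_conv M (Es \<circ> r) E"
    and P6: "\<exists>f :: real \<Rightarrow> real. (\<forall>\<epsilon>>0. f \<epsilon> > 0) \<and> filterlim f at_top (at_right 0) \<and>
               (\<forall>\<epsilon>>0. \<forall>E \<in> sets M. emeasure M E \<le> ennreal \<epsilon> \<longrightarrow>
                   ennreal (f \<epsilon>) * emeasure M E \<le> P E)"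
    and Omega: "\<Omega> \<in> sets M"
    and adm: "one_admissible M P \<Omega>"
    and nonempty: "cheeger1_sets M P \<Omega> \<noteq> {}"
  shows "\<exists>E \<in> cheeger1_sets M P \<Omega>. \<forall>F \<in> cheeger1_sets M P \<Omega>. emeasure M E \<le> emeasure M F"
proof -
  let ?C = "cheeger1_sets M P \<Omega>"
  obtain E\<^sub>0 where E\<^sub>0: "E\<^sub>0 \<in> ?C"
    using nonempty by blast
  obtain Fs where Fs: "\<And>k. Fs k \<in> ?C" "\<And>k. emeasure M (Fs k) \<le> emeasure M E\<^sub>0"
    and Fs_lim: "(\<lambda>k. emeasure M (Fs k)) \<longlonglongrightarrow> (INF F\<in>?C. emeasure M F)"
    by (rule minimizing_sequence_below[OF E\<^sub>0, where g = "emeasure M"]) blast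
  have "emeasure M E\<^sub>0 < \<infinity>"
    using E\<^sub>0 by (simp add: cheeger1_sets_def cheeger_competitors_def)
  obtain r E where r: "strict_mono r" and E: "E \<in> sets M" "chi_L1_conv M (Fs \<circ> r) E"
    by (rule cheeger1_sets_L1_convergent_subseq[OF P5_compact Fs \<open>emeasure M E\<^sub>0 < \<infinity>\<close>])
  have Fs_sets: "(Fs \<circ> r) k \<in> sets M" for k
    using Fs(1) by (simp add: cheeger1_sets_def cheeger_competitors_def)
  have E_measure: "emeasure M E = (INF F\<in>?C. emeasure M F)"
    using chi_L1_conv_emeasure[OF Fs_sets E] LIMSEQ_subseq_LIMSEQ[OF Fs_lim r]
    by (simp add: o_def LIMSEQ_unique)
  obtain f :: "real \<Rightarrow> real" where "filterlim f at_top (at_right 0)" and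
    "\<forall>\<epsilon>>0. \<forall>E \<in> sets M. emeasure M E \<le> ennreal \<epsilon> \<longrightarrow> ennreal (f \<epsilon>) * emeasure M E \<le> P E"
    using P6 by blast
  then have "0 < emeasure M E"
    unfolding E_measure by (rule INF_emeasure_cheeger1_sets_pos)
  have "(Fs \<circ> r) k \<in> ?C" for k
    using Fs(1) by simp
  from cheeger1_sets_closed_under_L1_limits[OF P4 Omega this E \<open>0 < emeasure M E\<close>]
  have "E \<in> ?C" .
  moreover have "emeasure M E \<le> emeasure M F" if "F \<in> ?C" for F
    unfolding E_measure using that by (rule INF_lower)
  ultimately show ?thesis
    by blast
qed

end
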